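(* Let $B>1$, $0<\delta<\frac{1}{1+B}$ and $T>0$. For every $t\ge\delta^{-1}T$ there is a finite sequence $s_1,\dots,s_N$ of reals such that $t=s_1+\cdots+s_N$, $s_1=Bs_2$, $s_i=(1+\delta)s_{i+1}$ for $2\le i\le N-1$, and $T\le s_N\le2T$. *)

theory Defs
  imports Complex_Main
begin

end

theory Submission
  imports Defs
begin

text \<open>Fix the length \<open>N = n + 2\<close> and the last term \<open>x\<close>. The recursion then forces
  \<open>s\<^sub>i = (1 + \<delta>)\<^bsup>N-i\<^esup> x\<close> for \<open>i \<ge> 2\<close> and \<open>s\<^sub>1 = B (1 + \<delta>)\<^sup>n x\<close>, so the total is
  \<open>x g\<^sub>n\<close> with \<open>g\<^sub>n = chain_weight B (1 + \<delta>) n\<close>. The weights grow by \<open>g\<^sub>n\<^sub>+\<^sub>1 = (1 + \<delta>) g\<^sub>n + 1\<close>,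
  which is at most \<open>2 g\<^sub>n\<close> because \<open>g\<^sub>n \<ge> B + 1\<close> and \<open>\<delta> < 1/(1 + B)\<close>; they start at
  \<open>B + 1 < 1/\<delta> \<le> t/T\<close> and are unbounded. Taking the last \<open>n\<close> with \<open>g\<^sub>n \<le> t/T\<close> and
  \<open>x = t / g\<^sub>n\<close> gives \<open>T \<le> x < 2T\<close>.\<close>

definition chain_weight :: "real \<Rightarrow> real \<Rightarrow> nat \<Rightarrow> real" where
  "chain_weight B q n = B * q ^ n + (\<Sum>k\<le>n. q ^ k)"

lemma chain_weight_Suc: "chain_weight B q (Suc n) = q * chain_weight B q n + 1"
proof -
  have "(\<Sum>k\<le>Suc n. q ^ k) = 1 + q * (\<Sum>k\<le>n. q ^ k)"
    by (simp only: sum.atMost_Suc_shift power_0 power_Suc sum_distrib_left)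
  then show ?thesis
    unfolding chain_weight_def by (simp add: algebra_simps)
qed

lemma chain_weight_lower_bound:
  assumes "B \<ge> 0" and "q \<ge> 1"
  shows "B + real (Suc n) \<le> chain_weight B q n"
proof -
  have "B \<le> B * q ^ n"
    using assms by (simp add: mult_le_cancel_left1)
  moreover have "real (Suc n) \<le> (\<Sum>k\<le>n. q ^ k)"
    using sum_mono[of "{..n}" "\<lambda>_. 1" "\<lambda>k. q ^ k"] assms(2) by simp
  ultimately show ?thesis
    unfolding chain_weight_def by linarith
qed

lemma chain_weight_Suc_le_double:
  assumes "B \<ge> 0" and "q \<ge> 1" and "q \<le> 2" and "(2 - q) * (B + 1) \<ge> 1"
  shows "chain_weight B q (Suc n) \<le> 2 * chain_weight B q n"
proof -
  have "(2 - q) * (B + 1) \<le> (2 - q) * chain_weight B q n"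
    using chain_weight_lower_bound[OF assms(1,2), of n] assms(3)
    by (intro mult_left_mono) auto
  then show ?thesis
    using assms(4) by (simp add: chain_weight_Suc algebra_simps)
qed

lemma sum_reversed_powers:
  fixes q :: "'a::semiring_1"
  shows "(\<Sum>i=2..n+2. q ^ (n + 2 - i)) = (\<Sum>k\<le>n. q ^ k)"
  by (rule sum.reindex_bij_witness[of _ "\<lambda>k. n + 2 - k" "\<lambda>i. n + 2 - i"]) auto

lemma chain_with_last_term:
  "\<exists>s::nat \<Rightarrow> real. (\<Sum>i=1..n+2. s i) = x * chain_weight B q n \<and>
     s 1 = B * s 2 \<and>
     (\<forall>i. 2 \<le> i \<and> i \<le> n + 1 \<longrightarrow> s i = q * s (i + 1)) \<and>
     s (n + 2) = x"
proof -
  define s where "s i = (if i = 1 then B * q ^ n * x else q ^ (n + 2 - i) * x)" for i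
  have "{1..n+2} = insert 1 {2..n+2}"
    by auto
  then have "(\<Sum>i=1..n+2. s i) = s 1 + (\<Sum>i=2..n+2. q ^ (n + 2 - i) * x)"
    by (simp add: s_def)
  also have "\<dots> = B * q ^ n * x + (\<Sum>k\<le>n. q ^ k) * x"
    by (simp only: sum_reversed_powers flip: sum_distrib_right) (simp add: s_def)
  also have "\<dots> = x * chain_weight B q n"
    by (simp add: chain_weight_def algebra_simps)
  finally have "(\<Sum>i=1..n+2. s i) = x * chain_weight B q n" .
  moreover have "s i = q * s (i + 1)" if "2 \<le> i" "i \<le> n + 1" for i
  proof -
    have "n + 2 - i = Suc (n + 2 - (i + 1))"
      using that by simp
    then show ?thesis
      using that by (simp add: s_def)
  qed
  ultimately show ?thesis
    by (intro exI[of _ s]) (simp add: s_def)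
qed

lemma chain_weight_bracket:
  assumes "B \<ge> 0" and "q \<ge> 1" and "B + 1 \<le> u"
  shows "\<exists>n. chain_weight B q n \<le> u \<and> u < chain_weight B q (Suc n)"
proof -
  obtain m where "u < real m"
    using reals_Archimedean2 by blast
  moreover have "real m \<le> chain_weight B q m"
    using chain_weight_lower_bound[OF assms(1,2), of m] assms(1) by simp
  ultimately have "u < chain_weight B q m"
    by linarith
  moreover have "\<not> u < chain_weight B q 0"
    using assms(3) by (simp add: chain_weight_def)
  ultimately obtain k where "\<forall>i\<le>k. \<not> u < chain_weight B q i" and "u < chain_weight B q (Suc k)"
    using ex_least_nat_less[of "\<lambda>i. u < chain_weight B q i" m] by blast
  then show ?thesis
    by (auto simp: not_less)
qed

lemma chain_weight_bracket_double:
  assumes "B \<ge> 0" and "1 \<le> q" and "q \<le> 2" and "(2 - q) * (B + 1) \<ge> 1" and "B + 1 \<le> u"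
  shows "\<exists>n. chain_weight B q n \<le> u \<and> u < 2 * chain_weight B q n"
  using chain_weight_bracket[OF assms(1,2,5)] chain_weight_Suc_le_double[OF assms(1-4)]
  by (meson less_le_trans)

theorem lemma6p2:
  fixes B \<delta> T t :: real
  assumes "B > 1" and "0 < \<delta>" and "\<delta> < 1 / (1 + B)" and "T > 0"
    and "t \<ge> T / \<delta>"
  shows "\<exists>(N::nat) (s::nat \<Rightarrow> real). N \<ge> 2 \<and>
           t = (\<Sum>i=1..N. s i) \<and>
           s 1 = B * s 2 \<and>
           (\<forall>i. 2 \<le> i \<and> i \<le> N - 1 \<longrightarrow> s i = (1 + \<delta>) * s (i + 1)) \<and>
           T \<le> s N \<and> s N \<le> 2 * T"
proof -
  let ?g = "chain_weight B (1 + \<delta>)"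
  have small_\<delta>: "\<delta> * (1 + B) < 1"
    using assms(1,3) by (simp add: field_simps)
  have "\<delta> < 1"
    using small_\<delta> distrib_left[of \<delta> 1 B] mult_pos_pos[of \<delta> B] assms(1,2) by linarith
  have "B + 1 < 1 / \<delta>"
    using small_\<delta> assms(2) by (simp add: field_simps)
  also have "1 / \<delta> \<le> t / T"
    using assms(2,4,5) by (simp add: field_simps)
  finally obtain n where below: "?g n \<le> t / T" and above: "t / T < 2 * ?g n"
    using chain_weight_bracket_double[of B "1 + \<delta>" "t / T"] assms(1,2) small_\<delta> \<open>\<delta> < 1\<close>
    by (force simp: algebra_simps)
  have g_pos: "?g n > 0"
    using chain_weight_lower_bound[of B "1 + \<delta>" n] assms(1,2) by simp
  obtain s where "(\<Sum>i=1..n+2. s i) = t / ?g n * ?g n" "s 1 = B * s 2"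
    "\<forall>i. 2 \<le> i \<and> i \<le> n + 1 \<longrightarrow> s i = (1 + \<delta>) * s (i + 1)" "s (n + 2) = t / ?g n"
    using chain_with_last_term by blast
  moreover have "T \<le> t / ?g n" and "t / ?g n \<le> 2 * T"
    using below above g_pos assms(4) by (simp_all add: field_simps)
  ultimately show ?thesis
    using g_pos by (intro exI[of _ "n + 2"] exI[of _ s]) auto
qed

end
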